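(* Let $k$ be an algebraically closed field of characteristic $p>2$, let $X$ be the smooth projective curve over $k$ with affine equation $y^2=x^p-x$, of genus $g=(p-1)/2$, and let $G=\operatorname{Aut}_k(X)$, described below. Let $\theta:\operatorname{SL}_2(\mathbf{F}_p)\to G$ send $\sigma$ to the class of $(\sigma,1)$, and let $H=\operatorname{im}\theta$. Let $V$ be the $k[H]$-module $\operatorname{Sym}^{g-1}(k^2)$ described below. Then the $k$-linear map $$\varphi: \operatorname{res}_H\big(H^0(X,\Omega^1_{X/k})\big)\to V,\qquad \frac{x^i\,dx}{y}\mapsto u^iv^{g-i-1}\quad (i=0,\dots,g-1)$$ is an isomorphism of $k[H]$-modules.
   Context: Let $\widetilde G\subseteq \operatorname{GL}_2(\mathbf{F}_p)\times \mathbf{F}_{p^2}^\times$ be the subgroup of pairs $(\sigma,u_\sigma)$ with $\det\sigma=u_\sigma^2$; $\mathbf{F}_p^\times$ acts on $\widetilde G$ by $\lambda(\sigma,u_\sigma)=(\lambda\sigma,\lambda^{(p+1)/2}u_\sigma)$, and $G=\mathbf{F}_p^\times\backslash\widetilde G$, which equals $\operatorname{Aut}_k(X)$. The class of $(\sigma,u_\sigma)$ with $\sigma=\begin{pmatrix}a&b\\c&d\end{pmatrix}$ acts on affine coordinates of $X$ by $(x,y)\mapsto\left(\frac{ax+b}{cx+d},\,u_\sigma\frac{y}{(cx+d)^{(p+1)/2}}\right)$, and $G$ acts on $H^0(X,\Omega^1_{X/k})$ functorially (by pullback/transport of forms). The elements $x^i\,dx/y$, $i=0,\dots,g-1$, form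 a $k$-basis of $H^0(X,\Omega^1_{X/k})$. Identify $\operatorname{Sym}^{g-1}(k^2)$ with the homogeneous polynomials of degree $g-1$ in $k[u,v]$, with $\begin{pmatrix}a&b\\c&d\end{pmatrix}\in\operatorname{SL}_2(\mathbf{F}_p)$ acting by substituting $u\mapsto au+bv$, $v\mapsto cu+dv$. The kernel of $\theta$ ($\{I\}$ if $p\equiv1\bmod 4$, $\{\pm I\}$ if $p\equiv 3\bmod 4$) acts trivially on this space, so $h=\theta(\sigma)\in H$ acting as $\sigma$ gives a well-defined $k[H]$-module $V$. *)

theory Defs
  imports "HOL-Computational_Algebra.Polynomial_Factorial" "HOL-Library.Product_Plus" "HOL-Number_Theory.Cong"
begin

type_synonym 'k ratfn = "'k poly fract"

(* The function field K = k(X) = k(x)[y]/(y^2 - x^p + x):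
   a pair (f, g) stands for f + g*y. *)
type_synonym 'k fnfield = "'k ratfn \<times> 'k ratfn"

(* Rational (meromorphic) differentials on X: since Omega_{K/k} = K dx,
   a pair h stands for the differential h dx. *)
type_synonym 'k mdiff = "'k fnfield"

definition const_rf :: "'k::field \<Rightarrow> 'k ratfn" where
  "const_rf c = to_fract [:c:]"

definition xfun :: "'k::field ratfn" where
  "xfun = to_fract [:0, 1:]"

definition rf_scale :: "'k::field ratfn \<Rightarrow> 'k fnfield \<Rightarrow> 'k fnfield" where
  "rf_scale r w = (r * fst w, r * snd w)"

definition k_smul :: "'k::field \<Rightarrow> 'k mdiff \<Rightarrow> 'k mdiff" where
  "k_smul c w = rf_scale (const_rf c) w"

definition subst_poly_rf :: "'k::field poly \<Rightarrow> 'k ratfn \<Rightarrow> 'k ratfn" where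
  "subst_poly_rf q z = poly (map_poly const_rf q) z"

definition subst_rf :: "'k::field ratfn \<Rightarrow> 'k ratfn \<Rightarrow> 'k ratfn" where
  "subst_rf r z = (SOME t. \<exists>n m. m \<noteq> 0 \<and> r = Fract n m \<and>
                       t = subst_poly_rf n z / subst_poly_rf m z)"

definition deriv_rf :: "'k::field ratfn \<Rightarrow> 'k ratfn" where
  "deriv_rf r = (SOME t. \<exists>n m. m \<noteq> 0 \<and> r = Fract n m \<and>
                   t = to_fract (pderiv n * m - n * pderiv m) / to_fract (m ^ 2))"

definition moeb :: "'k::field \<Rightarrow> 'k \<Rightarrow> 'k \<Rightarrow> 'k \<Rightarrow> 'k ratfn" where
  "moeb a b c d = to_fract [:b, a:] / to_fract [:d, c:]"

(* The automorphism of X given by the class of (sigma, u), sigma = (a b; c d),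
   acting on the function field by pullback of functions:
   x |-> (ax+b)/(cx+d),  y |-> u y / (cx+d)^((p+1)/2). *)
definition aut_fn :: "nat \<Rightarrow> 'k::field \<Rightarrow> 'k \<Rightarrow> 'k \<Rightarrow> 'k \<Rightarrow> 'k \<Rightarrow> 'k fnfield \<Rightarrow> 'k fnfield" where
  "aut_fn p a b c d u w =
     (subst_rf (fst w) (moeb a b c d),
      subst_rf (snd w) (moeb a b c d) * const_rf u / to_fract [:d, c:] ^ ((p + 1) div 2))"

(* Pullback of the differential h dx:  sigma^*(h dx) = sigma^*(h) d(sigma^* x). *)
definition pullback_diff :: "nat \<Rightarrow> 'k::field \<Rightarrow> 'k \<Rightarrow> 'k \<Rightarrow> 'k \<Rightarrow> 'k \<Rightarrow> 'k mdiff \<Rightarrow> 'k mdiff" where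
  "pullback_diff p a b c d u w = rf_scale (deriv_rf (moeb a b c d)) (aut_fn p a b c d u w)"

(* the differential x^i dx / y  (note 1/y = y/(x^p - x)) *)
definition hol_basis :: "nat \<Rightarrow> nat \<Rightarrow> 'k::field mdiff" where
  "hol_basis p i = (0, xfun ^ i / (xfun ^ p - xfun))"

definition genus :: "nat \<Rightarrow> nat" where
  "genus p = (p - 1) div 2"

definition H0 :: "nat \<Rightarrow> 'k::field mdiff set" where
  "H0 p = {(\<Sum>i<genus p. k_smul (c i) (hol_basis p i)) | c. True}"

(* Homogeneous polynomials in k[u,v]: represented in ('k poly) poly,
   outer variable u, inner variable v. *)
definition sym_space :: "nat \<Rightarrow> 'k::field poly poly set" where
  "sym_space n = {P. \<forall>i j. coeff (coeff P i) j \<noteq> 0 \<longrightarrow> i + j = n}"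

definition sym_monom :: "nat \<Rightarrow> nat \<Rightarrow> 'k::field poly poly" where
  "sym_monom n i = monom (monom 1 (n - i)) i"

(* the linear form a u + b v *)
definition lin_uv :: "'k::field \<Rightarrow> 'k \<Rightarrow> 'k poly poly" where
  "lin_uv a b = [:[:0, b:], [:a:]:]"

(* action of (a b; c d): substitute u |-> a u + b v, v |-> c u + d v *)
definition sym_act :: "'k::field \<Rightarrow> 'k \<Rightarrow> 'k \<Rightarrow> 'k \<Rightarrow> 'k poly poly \<Rightarrow> 'k poly poly" where
  "sym_act a b c d P =
     poly (map_poly (\<lambda>q. poly (map_poly (\<lambda>e. [:[:e:]:]) q) (lin_uv c d)) P) (lin_uv a b)"

(* SL_2(F_p), with F_p represented by the residues 0..p-1 *)
definition SL2_Fp :: "nat \<Rightarrow> int \<Rightarrow> int \<Rightarrow> int \<Rightarrow> int \<Rightarrow> bool" where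
  "SL2_Fp p a b c d \<longleftrightarrow> a \<in> {0..<int p} \<and> b \<in> {0..<int p} \<and> c \<in> {0..<int p} \<and> d \<in> {0..<int p}
      \<and> [a * d - b * c = 1] (mod int p)"

definition alg_closed_field :: "'k::field itself \<Rightarrow> bool" where
  "alg_closed_field _ \<longleftrightarrow> (\<forall>q::'k poly. degree q > 0 \<longrightarrow> (\<exists>z. poly q z = 0))"

end

theory Submission
  imports Defs
begin

text \<open>
  Write a holomorphic differential as \<open>N(x) y dx / (x^p - x)\<close> with \<open>deg N < g\<close>. For
  \<open>\<sigma> = (a b; c d)\<close> of determinant 1 with entries in \<open>F_p\<close> put \<open>A = ax + b\<close> and \<open>L = cx + d\<close>.
  Pulling back by \<open>\<sigma>\<close> replaces \<open>x\<close> by \<open>A/L\<close>, \<open>dx\<close> by \<open>dx / L^2\<close> and \<open>y\<close> by \<open>y / L^(g+1)\<close>.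
  Since \<open>A^p = a x^p + b\<close> and \<open>L^p = c x^p + d\<close>, we get \<open>A^p L - A L^p = (ad - bc)(x^p - x)\<close>,
  i.e. \<open>(A/L)^p - A/L = (x^p - x) / L^(p+1)\<close>. As \<open>p + 1 = 2g + 2\<close>, the powers of \<open>L\<close> cancel
  against \<open>N(A/L) = (\<Sum> c_i A^i L^(g-1-i)) / L^(g-1)\<close>, leaving the numerator \<open>\<Sum> c_i A^i L^(g-1-i)\<close>.
  This is what setting \<open>v = 1\<close> makes of \<open>\<sigma>\<close> applied to \<open>\<Sum> c_i u^i v^(g-1-i)\<close>, and setting
  \<open>v = 1\<close> is injective on homogeneous polynomials of degree \<open>g - 1\<close>.
\<close>

definition is_ring_hom :: "('a::comm_ring_1 \<Rightarrow> 'b::comm_ring_1) \<Rightarrow> bool" where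
  "is_ring_hom f \<longleftrightarrow>
     f 0 = 0 \<and> f 1 = 1 \<and> (\<forall>x y. f (x + y) = f x + f y) \<and> (\<forall>x y. f (x * y) = f x * f y)"

context
  fixes f :: "'a::comm_ring_1 \<Rightarrow> 'b::comm_ring_1"
  assumes hom: "is_ring_hom f"
begin

lemma is_ring_hom_0: "f 0 = 0"
  and is_ring_hom_1: "f 1 = 1"
  and is_ring_hom_add: "f (x + y) = f x + f y"
  and is_ring_hom_mult: "f (x * y) = f x * f y"
  using hom by (simp_all add: is_ring_hom_def)

lemma is_ring_hom_uminus: "f (- x) = - f x"
  using is_ring_hom_add[of x "- x"] by (simp add: is_ring_hom_0 eq_neg_iff_add_eq_0 add.commute)

lemma is_ring_hom_diff: "f (x - y) = f x - f y"
  using is_ring_hom_add[of x "- y"] by (simp add: is_ring_hom_uminus)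

lemma is_ring_hom_power: "f (x ^ n) = f x ^ n"
  by (induction n) (simp_all add: is_ring_hom_1 is_ring_hom_mult)

lemma is_ring_hom_sum: "f (sum h A) = (\<Sum>a\<in>A. f (h a))"
  by (induction A rule: infinite_finite_induct) (simp_all add: is_ring_hom_0 is_ring_hom_add)

lemma map_poly_add_ring_hom: "map_poly f (p + q) = map_poly f p + map_poly f q"
  by (intro poly_eqI) (simp add: coeff_map_poly is_ring_hom_0 is_ring_hom_add)

lemma map_poly_mult_ring_hom: "map_poly f (p * q) = map_poly f p * map_poly f q"
proof (induction p)
  case (pCons a p)
  have "map_poly f (pCons a p * q) = map_poly f (smult a q + pCons 0 (p * q))"
    by simp
  also have "\<dots> = smult (f a) (map_poly f q) + pCons 0 (map_poly f p * map_poly f q)"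
    by (simp add: map_poly_add_ring_hom map_poly_smult map_poly_pCons is_ring_hom_0 is_ring_hom_mult pCons)
  also have "\<dots> = map_poly f (pCons a p) * map_poly f q"
    by (simp add: map_poly_pCons is_ring_hom_0)
  finally show ?case .
qed (simp add: is_ring_hom_0)

lemma is_ring_hom_map_poly: "is_ring_hom (map_poly f)"
  unfolding is_ring_hom_def
  by (simp add: map_poly_add_ring_hom map_poly_mult_ring_hom is_ring_hom_0 is_ring_hom_1)

end

lemma is_ring_hom_comp: "is_ring_hom f \<Longrightarrow> is_ring_hom g \<Longrightarrow> is_ring_hom (\<lambda>x. g (f x))"
  by (simp add: is_ring_hom_def)

lemma is_ring_hom_poly: "is_ring_hom (\<lambda>q. poly q z)"
  by (simp add: is_ring_hom_def poly_mult)

lemma is_ring_hom_pCons_0: "is_ring_hom (\<lambda>e. [:e:])"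
  by (simp add: is_ring_hom_def)

lemma is_ring_hom_to_fract: "is_ring_hom to_fract"
  by (simp add: is_ring_hom_def)

section \<open>Frobenius\<close>

lemma frobenius_add:
  fixes x y :: "'a::comm_ring_1"
  assumes p: "prime p" and char: "CHAR('a) = p"
  shows "(x + y) ^ p = x ^ p + y ^ p"
proof -
  let ?t = "\<lambda>k. of_nat (p choose k) * x ^ k * y ^ (p - k) :: 'a"
  have p0: "p \<noteq> 0" using p by auto
  have "(x + y) ^ p = (\<Sum>k\<le>p. ?t k)" by (rule binomial_ring)
  also have "\<dots> = (\<Sum>k\<in>{0, p}. ?t k)"
  proof (rule sum.mono_neutral_right)
    show "\<forall>k\<in>{..p} - {0, p}. ?t k = 0"
    proof
      fix k assume "k \<in> {..p} - {0, p}"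
      hence "p dvd (p choose k)" using dvd_choose_prime[of k p] p by auto
      hence "of_nat (p choose k) = (0::'a)" using char by (simp add: of_nat_eq_0_iff_char_dvd)
      thus "?t k = 0" by simp
    qed
  qed auto
  also have "\<dots> = x ^ p + y ^ p" using p0 by simp
  finally show ?thesis .
qed

lemma frobenius_of_nat:
  assumes p: "prime p" and char: "CHAR('a::comm_ring_1) = p"
  shows "(of_nat n :: 'a) ^ p = of_nat n"
proof (induction n)
  case 0
  then show ?case using prime_gt_0_nat[OF p] by (simp add: power_0_left)
next
  case (Suc n)
  then show ?case using frobenius_add[OF p char, of 1 "of_nat n"] by simp
qed

lemma frobenius_of_int:
  assumes "prime p" and "CHAR('a::comm_ring_1) = p" and "a \<ge> 0"
  shows "(of_int a :: 'a) ^ p = of_int a"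
  using frobenius_of_nat[OF assms(1,2), of "nat a"] assms(3) by simp

lemma frobenius_linear_poly:
  fixes a b :: "'a::comm_ring_1"
  assumes p: "prime p" and char: "CHAR('a) = p" and "a ^ p = a" "b ^ p = b"
  shows "[:b, a:] ^ p = [:b:] + monom a p"
proof -
  have "[:b, a:] ^ p = ([:b:] + monom a 1) ^ p"
    by (simp add: monom_Suc monom_0)
  also have "\<dots> = [:b:] ^ p + monom a 1 ^ p"
    by (rule frobenius_add[OF p]) (simp add: char)
  finally show ?thesis
    using assms(3,4) by (simp add: monom_power is_ring_hom_power[OF is_ring_hom_pCons_0, symmetric])
qed

definition xp_minus_x :: "nat \<Rightarrow> 'k::field poly" where
  "xp_minus_x p = monom 1 p - monom 1 1"

lemma xp_minus_x_nonzero: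
  assumes "p \<ge> 2" shows "(xp_minus_x p :: 'k::field poly) \<noteq> 0"
proof -
  have "coeff (xp_minus_x p :: 'k poly) p = 1" using assms by (simp add: xp_minus_x_def coeff_monom)
  thus ?thesis by auto
qed

definition SL2_prime_field :: "nat \<Rightarrow> 'k::field \<Rightarrow> 'k \<Rightarrow> 'k \<Rightarrow> 'k \<Rightarrow> bool" where
  "SL2_prime_field p a b c d \<longleftrightarrow>
     a ^ p = a \<and> b ^ p = b \<and> c ^ p = c \<and> d ^ p = d \<and> a * d - b * c = 1"

lemma SL2_Fp_imp_SL2_prime_field:
  assumes p: "prime p" and char: "CHAR('k::field) = p" and "SL2_Fp p a b c d"
  shows "SL2_prime_field p (of_int a :: 'k) (of_int b) (of_int c) (of_int d)"
proof -
  have "[a * d - b * c = 1] (mod int CHAR('k))"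
    using assms(3) char by (simp add: SL2_Fp_def)
  hence "(of_int (a * d - b * c) :: 'k) = of_int 1"
    by (simp only: of_int_eq_iff_cong_CHAR)
  with assms(3) show ?thesis
    by (auto simp: SL2_prime_field_def SL2_Fp_def intro!: frobenius_of_int[OF p char])
qed

lemma SL2_prime_field_frobenius_identity:
  fixes a b c d :: "'k::field"
  assumes p: "prime p" and char: "CHAR('k) = p" and sl: "SL2_prime_field p a b c d"
  shows "[:b, a:] ^ p * [:d, c:] - [:b, a:] * [:d, c:] ^ p = xp_minus_x p"
proof -
  have "[:b, a:] ^ p * [:d, c:] - [:b, a:] * [:d, c:] ^ p =
        ([:b:] + monom a p) * ([:d:] + monom c 1) - ([:b:] + monom a 1) * ([:d:] + monom c p)"
    using sl by (simp add: SL2_prime_field_def frobenius_linear_poly[OF p char] monom_Suc monom_0)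
  also have "\<dots> = monom (a * d - b * c) p - monom (a * d - b * c) 1"
    by (simp add: algebra_simps monom_0[symmetric] mult_monom diff_monom[symmetric])
  finally show ?thesis
    using sl by (simp add: SL2_prime_field_def xp_minus_x_def)
qed

lemma is_ring_hom_const_rf: "is_ring_hom (const_rf :: 'k::field \<Rightarrow> _)"
  unfolding const_rf_def using is_ring_hom_comp[OF is_ring_hom_pCons_0 is_ring_hom_to_fract] by simp

lemma is_ring_hom_subst_poly_rf: "is_ring_hom (\<lambda>q. subst_poly_rf q z)"
  unfolding subst_poly_rf_def
  using is_ring_hom_comp[OF is_ring_hom_map_poly[OF is_ring_hom_const_rf] is_ring_hom_poly[of z]] by simp

lemma subst_poly_rf_monom: "subst_poly_rf (monom c i) z = const_rf c * z ^ i"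
  by (simp add: subst_poly_rf_def map_poly_monom is_ring_hom_0[OF is_ring_hom_const_rf] poly_monom)

lemma subst_poly_rf_pCons: "subst_poly_rf [:c, e:] z = const_rf c + const_rf e * z"
  by (simp add: subst_poly_rf_def map_poly_pCons is_ring_hom_0[OF is_ring_hom_const_rf])

text \<open>Algebraic closedness lets us split \<open>q\<close> into linear factors \<open>z - r\<close>, none of which vanishes.\<close>

lemma subst_poly_rf_nonzero:
  fixes z :: "'k::field ratfn"
  assumes closed: "alg_closed_field TYPE('k)" and nonconst: "\<And>r. z \<noteq> const_rf r"
    and "q \<noteq> 0"
  shows "subst_poly_rf q z \<noteq> 0"
  using \<open>q \<noteq> 0\<close>
proof (induction "degree q" arbitrary: q rule: less_induct)
  case less
  show ?case
  proof (cases "degree q = 0")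
    case True
    then obtain e where "q = [:e:]" "e \<noteq> 0"
      using less.prems by (metis degree_0_id pCons_eq_0_iff)
    thus ?thesis using subst_poly_rf_monom[of e 0 z] by (simp add: monom_0 const_rf_def)
  next
    case False
    then obtain r where "poly q r = 0" using closed by (auto simp: alg_closed_field_def)
    then obtain q' where q: "q = [:-r, 1:] * q'" by (auto simp: poly_eq_0_iff_dvd dvd_def)
    with less.prems have "q' \<noteq> 0" by auto
    hence "degree q = degree [:-r, 1:] + degree q'" unfolding q by (intro degree_mult_eq) auto
    hence "degree q = Suc (degree q')" by simp
    hence "subst_poly_rf q' z \<noteq> 0" using less.hyps \<open>q' \<noteq> 0\<close> by simp
    moreover have "subst_poly_rf [:-r, 1:] z = z - const_rf r"
      by (simp add: subst_poly_rf_pCons is_ring_hom_1[OF is_ring_hom_const_rf]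
          is_ring_hom_uminus[OF is_ring_hom_const_rf])
    ultimately show ?thesis
      using nonconst[of r] unfolding q is_ring_hom_mult[OF is_ring_hom_subst_poly_rf] by simp
  qed
qed

lemma subst_rf_Fract:
  fixes z :: "'k::field ratfn"
  assumes nonzero: "\<And>q. q \<noteq> 0 \<Longrightarrow> subst_poly_rf q z \<noteq> 0" and "M \<noteq> 0"
  shows "subst_rf (Fract N M) z = subst_poly_rf N z / subst_poly_rf M z"
  unfolding subst_rf_def
proof (rule someI2_ex)
  show "\<exists>t n m. m \<noteq> 0 \<and> Fract N M = Fract n m \<and> t = subst_poly_rf n z / subst_poly_rf m z"
    using \<open>M \<noteq> 0\<close> by blast
next
  fix t assume "\<exists>n m. m \<noteq> 0 \<and> Fract N M = Fract n m \<and> t = subst_poly_rf n z / subst_poly_rf m z"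
  then obtain n m where "m \<noteq> 0" "Fract N M = Fract n m" and t: "t = subst_poly_rf n z / subst_poly_rf m z"
    by blast
  hence "N * m = n * M" using \<open>M \<noteq> 0\<close> by (simp add: eq_fract)
  hence "subst_poly_rf N z * subst_poly_rf m z = subst_poly_rf n z * subst_poly_rf M z"
    by (metis is_ring_hom_mult[OF is_ring_hom_subst_poly_rf])
  thus "t = subst_poly_rf N z / subst_poly_rf M z"
    using t nonzero \<open>m \<noteq> 0\<close> \<open>M \<noteq> 0\<close> by (simp add: frac_eq_eq)
qed

lemma deriv_rf_Fract:
  fixes N M :: "'k::field poly"
  assumes "M \<noteq> 0"
  shows "deriv_rf (Fract N M) = to_fract (pderiv N * M - N * pderiv M) / to_fract (M ^ 2)"
  unfolding deriv_rf_def
proof (rule someI2_ex)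
  show "\<exists>t n m. m \<noteq> 0 \<and> Fract N M = Fract n m \<and>
          t = to_fract (pderiv n * m - n * pderiv m) / to_fract (m ^ 2)"
    using \<open>M \<noteq> 0\<close> by blast
next
  fix t assume "\<exists>n m. m \<noteq> 0 \<and> Fract N M = Fract n m \<and>
                  t = to_fract (pderiv n * m - n * pderiv m) / to_fract (m ^ 2)"
  then obtain n m where "m \<noteq> 0" "Fract N M = Fract n m"
    and t: "t = to_fract (pderiv n * m - n * pderiv m) / to_fract (m ^ 2)"
    by blast
  hence e: "n * M = N * m" using \<open>M \<noteq> 0\<close> by (simp add: eq_fract)
  have e': "pderiv n * M + n * pderiv M = pderiv N * m + N * pderiv m"
    using arg_cong[OF e, of pderiv] by (simp add: pderiv_mult algebra_simps)
  have "(pderiv n * m - n * pderiv m) * M ^ 2 - (pderiv N * M - N * pderiv M) * m ^ 2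
        = m * M * ((pderiv n * M + n * pderiv M) - (pderiv N * m + N * pderiv m))
          - (n * M - N * m) * (pderiv m * M + m * pderiv M)"
    by (simp add: algebra_simps power2_eq_square)
  also have "\<dots> = 0" using e e' by simp
  finally have "(pderiv n * m - n * pderiv m) * M ^ 2 = (pderiv N * M - N * pderiv M) * m ^ 2"
    by simp
  hence "to_fract (pderiv n * m - n * pderiv m) * to_fract (M ^ 2)
         = to_fract (pderiv N * M - N * pderiv M) * to_fract (m ^ 2)"
    by (metis to_fract_mult)
  thus "t = to_fract (pderiv N * M - N * pderiv M) / to_fract (M ^ 2)"
    using t \<open>m \<noteq> 0\<close> \<open>M \<noteq> 0\<close> by (simp add: frac_eq_eq del: to_fract_mult)
qed

lemma moeb_nonconst:
  fixes a b c d :: "'k::field"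
  assumes det: "a * d - b * c = 1"
  shows "moeb a b c d \<noteq> const_rf r"
proof
  assume "moeb a b c d = const_rf r"
  moreover have "to_fract [:d, c:] \<noteq> 0" using det by auto
  ultimately have "to_fract [:b, a:] = to_fract ([:r:] * [:d, c:])"
    by (simp add: moeb_def const_rf_def field_simps del: mult_pCons_left mult_pCons_right)
  hence "b = r * d" "a = r * c" by auto
  with det show False by (simp add: algebra_simps)
qed

lemma deriv_rf_moeb:
  fixes a b c d :: "'k::field"
  assumes det: "a * d - b * c = 1"
  shows "deriv_rf (moeb a b c d) = 1 / to_fract [:d, c:] ^ 2"
proof -
  have "deriv_rf (moeb a b c d) = deriv_rf (Fract [:b, a:] [:d, c:])"
    by (simp add: moeb_def Fract_conv_to_fract)
  also have "\<dots> = to_fract (pderiv [:b, a:] * [:d, c:] - [:b, a:] * pderiv [:d, c:]) / to_fract ([:d, c:] ^ 2)"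
    using det by (intro deriv_rf_Fract) auto
  also have "pderiv [:b, a:] * [:d, c:] - [:b, a:] * pderiv [:d, c:] = [:a * d - b * c:]"
    by (simp add: pderiv_pCons algebra_simps)
  finally show ?thesis
    using det by (simp add: is_ring_hom_power[OF is_ring_hom_to_fract] pCons_one)
qed

section \<open>Pullback of holomorphic differentials\<close>

lemma sum_power_divide_homogenize:
  fixes A L :: "'f::field"
  assumes "L \<noteq> 0" and "g \<le> n + 1"
  shows "(\<Sum>i<g. k i * (A / L) ^ i) = (\<Sum>i<g. k i * A ^ i * L ^ (n - i)) / L ^ n"
  unfolding sum_divide_distrib
proof (rule sum.cong[OF refl])
  fix i assume "i \<in> {..<g}"
  hence "L ^ n = L ^ i * L ^ (n - i)" using assms(2) by (simp flip: power_add)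
  thus "k i * (A / L) ^ i = k i * A ^ i * L ^ (n - i) / L ^ n"
    using assms(1) by (simp add: power_divide)
qed

lemma power_divide_diff_divide:
  fixes A L :: "'f::field"
  assumes "L \<noteq> 0"
  shows "(A / L) ^ p - A / L = (A ^ p * L - A * L ^ p) / L ^ (p + 1)"
  using assms by (simp add: power_divide field_simps)

definition poly_of_coeffs :: "nat \<Rightarrow> (nat \<Rightarrow> 'a::comm_monoid_add) \<Rightarrow> 'a poly" where
  "poly_of_coeffs n cs = (\<Sum>i<n. monom (cs i) i)"

lemma poly_of_coeffs_coeff:
  assumes "degree q < n"
  shows "poly_of_coeffs n (coeff q) = q"
proof (rule poly_eqI)
  fix j
  show "coeff (poly_of_coeffs n (coeff q)) j = coeff q j"
    using assms coeff_eq_0[of q j]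
    by (cases "j < n") (simp_all add: poly_of_coeffs_def coeff_sum coeff_monom)
qed

definition hol_diff :: "nat \<Rightarrow> (nat \<Rightarrow> 'k::field) \<Rightarrow> 'k mdiff" where
  "hol_diff p cs = (\<Sum>i<genus p. k_smul (cs i) (hol_basis p i))"

lemma H0_eq_range_hol_diff: "H0 p = range (hol_diff p)"
  by (auto simp: H0_def hol_diff_def)

lemma hol_diff_eq:
  fixes cs :: "nat \<Rightarrow> 'k::field"
  shows "hol_diff p cs = (0, to_fract (poly_of_coeffs (genus p) cs) / to_fract (xp_minus_x p))"
proof -
  have xfun_power: "xfun ^ n = to_fract (monom 1 n :: 'k poly)" for n
    by (simp add: xfun_def monom_altdef flip: is_ring_hom_power[OF is_ring_hom_to_fract])
  have xp_minus_x: "xfun ^ p - xfun = to_fract (xp_minus_x p :: 'k poly)"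
    using xfun_power[of p] xfun_power[of 1] by (simp add: xp_minus_x_def)
  have "const_rf (cs i) * xfun ^ i / (xfun ^ p - xfun) = to_fract (monom (cs i) i) / to_fract (xp_minus_x p)"
    for i
  proof -
    have "const_rf (cs i) * xfun ^ i = to_fract ([:cs i:] * monom 1 i)"
      by (simp only: const_rf_def xfun_power to_fract_mult)
    thus ?thesis
      by (simp add: xp_minus_x smult_monom)
  qed
  thus ?thesis
    by (simp add: hol_diff_def poly_of_coeffs_def fst_sum snd_sum k_smul_def rf_scale_def
        hol_basis_def sum_divide_distrib prod_eq_iff)
qed

definition transformed_numerator ::
    "nat \<Rightarrow> 'k::field \<Rightarrow> 'k \<Rightarrow> 'k \<Rightarrow> 'k \<Rightarrow> (nat \<Rightarrow> 'k) \<Rightarrow> 'k poly" where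
  "transformed_numerator g a b c d cs = (\<Sum>i<g. [:cs i:] * [:b, a:] ^ i * [:d, c:] ^ (g - 1 - i))"

lemma degree_transformed_numerator: "degree (transformed_numerator g a b c d cs) \<le> g - 1"
  unfolding transformed_numerator_def
proof (rule degree_sum_le)
  fix i assume i: "i \<in> {..<g}"
  have "degree ([:cs i:] * [:b, a:] ^ i * [:d, c:] ^ (g - 1 - i))
        \<le> degree [:cs i:] + degree ([:b, a:] ^ i) + degree ([:d, c:] ^ (g - 1 - i))"
    by (meson add_right_mono degree_mult_le order_trans)
  also have "\<dots> \<le> 0 + i * 1 + (g - 1 - i) * 1"
    by (intro add_mono degree_power_le[THEN order_trans]) auto
  finally show "degree ([:cs i:] * [:b, a:] ^ i * [:d, c:] ^ (g - 1 - i)) \<le> g - 1"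
    using i by simp
qed simp

lemma subst_poly_rf_moeb_poly_of_coeffs:
  assumes "[:d, c:] \<noteq> (0 :: 'k::field poly)"
  shows "subst_poly_rf (poly_of_coeffs g cs) (moeb a b c d)
       = to_fract (transformed_numerator g a b c d cs) / to_fract [:d, c:] ^ (g - 1)"
proof -
  have "to_fract (transformed_numerator g a b c d cs)
      = (\<Sum>i<g. const_rf (cs i) * to_fract [:b, a:] ^ i * to_fract [:d, c:] ^ (g - 1 - i))"
    by (simp only: transformed_numerator_def const_rf_def to_fract_sum to_fract_mult
        is_ring_hom_power[OF is_ring_hom_to_fract])
  moreover have "subst_poly_rf (poly_of_coeffs g cs) (moeb a b c d)
      = (\<Sum>i<g. const_rf (cs i) * (to_fract [:b, a:] / to_fract [:d, c:]) ^ i)"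
    by (simp add: poly_of_coeffs_def moeb_def is_ring_hom_sum[OF is_ring_hom_subst_poly_rf]
        subst_poly_rf_monom)
  ultimately show ?thesis
    using sum_power_divide_homogenize[of "to_fract [:d, c:]" g "g - 1"] assms by simp
qed

lemma subst_poly_rf_moeb_xp_minus_x:
  fixes a b c d :: "'k::field"
  assumes "prime p" and "CHAR('k) = p" and sl: "SL2_prime_field p a b c d"
  shows "subst_poly_rf (xp_minus_x p) (moeb a b c d) = to_fract (xp_minus_x p) / to_fract [:d, c:] ^ (p + 1)"
proof -
  let ?A = "to_fract [:b, a:]" and ?L = "to_fract [:d, c:]"
  have "subst_poly_rf (xp_minus_x p) (moeb a b c d) = (?A / ?L) ^ p - ?A / ?L"
    by (simp add: xp_minus_x_def moeb_def is_ring_hom_diff[OF is_ring_hom_subst_poly_rf]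
        subst_poly_rf_monom is_ring_hom_1[OF is_ring_hom_const_rf])
  also have "\<dots> = (?A ^ p * ?L - ?A * ?L ^ p) / ?L ^ (p + 1)"
    using sl by (intro power_divide_diff_divide) (auto simp: SL2_prime_field_def)
  also have "?A ^ p * ?L - ?A * ?L ^ p = to_fract (xp_minus_x p)"
    by (simp only: SL2_prime_field_frobenius_identity[OF assms, symmetric] to_fract_diff
        to_fract_mult is_ring_hom_power[OF is_ring_hom_to_fract])
  finally show ?thesis .
qed

lemma pullback_diff_hol_diff:
  fixes a b c d :: "'k::field"
  assumes closed: "alg_closed_field TYPE('k)" and p: "prime p" "p > 2" and char: "CHAR('k) = p"
    and sl: "SL2_prime_field p a b c d"
  shows "pullback_diff p a b c d 1 (hol_diff p cs)
       = hol_diff p (coeff (transformed_numerator (genus p) a b c d cs))"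
proof -
  define g where "g = genus p"
  obtain k where "p = 2 * k + 1" using prime_odd_nat[OF p] by (auto elim: oddE)
  hence g: "g \<ge> 1" "Suc p div 2 = g + 1" "t ^ p = t ^ 2 * t ^ (g - 1) * t ^ g" for t :: "'k ratfn"
    using p by (auto simp: g_def genus_def mult_2 simp flip: power_add)
  define L where "L = to_fract [:d, c:]"
  have "[:d, c:] \<noteq> 0" using sl by (auto simp: SL2_prime_field_def)
  hence "L \<noteq> 0" by (simp add: L_def)
  have det: "a * d - b * c = 1" using sl by (simp add: SL2_prime_field_def)
  have nonzero: "q \<noteq> 0 \<Longrightarrow> subst_poly_rf q (moeb a b c d) \<noteq> 0" for q
    by (rule subst_poly_rf_nonzero[OF closed moeb_nonconst[OF det]])
  have "subst_rf 0 (moeb a b c d) = 0"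
    using subst_rf_Fract[OF nonzero, of 1 0]
    by (simp add: Zero_fract_def[symmetric] is_ring_hom_0[OF is_ring_hom_subst_poly_rf])
  moreover have "subst_rf (to_fract (poly_of_coeffs g cs) / to_fract (xp_minus_x p)) (moeb a b c d)
      = to_fract (transformed_numerator g a b c d cs) / L ^ (g - 1) / (to_fract (xp_minus_x p) / L ^ (p + 1))"
    using subst_rf_Fract[OF nonzero xp_minus_x_nonzero] p
    by (simp add: Fract_conv_to_fract subst_poly_rf_moeb_poly_of_coeffs[OF \<open>[:d, c:] \<noteq> 0\<close>]
        subst_poly_rf_moeb_xp_minus_x[OF p(1) char sl] L_def)
  ultimately have "pullback_diff p a b c d 1 (hol_diff p cs)
      = (0, 1 / L ^ 2 * (to_fract (transformed_numerator g a b c d cs) / L ^ (g - 1)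
              / (to_fract (xp_minus_x p) / L ^ (p + 1)) / L ^ (g + 1)))"
    by (simp add: hol_diff_eq pullback_diff_def aut_fn_def rf_scale_def deriv_rf_moeb[OF det] g(2)
        is_ring_hom_1[OF is_ring_hom_const_rf] flip: g_def L_def)
  also have "\<dots> = (0, to_fract (transformed_numerator g a b c d cs) / to_fract (xp_minus_x p))"
    using \<open>L \<noteq> 0\<close> xp_minus_x_nonzero[of p] p by (simp add: g(3) field_simps)
  also have "\<dots> = hol_diff p (coeff (transformed_numerator g a b c d cs))"
    using degree_transformed_numerator[of g a b c d cs] g(1)
    by (simp add: hol_diff_eq poly_of_coeffs_coeff flip: g_def)
  finally show ?thesis by (simp add: g_def)
qed

section \<open>Homogeneous polynomials\<close>

lemma sym_spaceI: "(\<And>i j. coeff (coeff P i) j \<noteq> 0 \<Longrightarrow> i + j = n) \<Longrightarrow> P \<in> sym_space n"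
  by (auto simp: sym_space_def)

lemma sym_spaceD: "P \<in> sym_space n \<Longrightarrow> coeff (coeff P i) j \<noteq> 0 \<Longrightarrow> i + j = n"
  by (auto simp: sym_space_def)

lemma sym_space_0: "0 \<in> sym_space n"
  by (rule sym_spaceI) simp

lemma sym_space_add: "P + Q \<in> sym_space n" if "P \<in> sym_space n" "Q \<in> sym_space n"
proof (rule sym_spaceI)
  fix i j assume "coeff (coeff (P + Q) i) j \<noteq> 0"
  hence "coeff (coeff P i) j \<noteq> 0 \<or> coeff (coeff Q i) j \<noteq> 0" by auto
  thus "i + j = n" using that by (auto dest: sym_spaceD)
qed

lemma sym_space_sum: "(\<And>a. a \<in> A \<Longrightarrow> f a \<in> sym_space n) \<Longrightarrow> sum f A \<in> sym_space n"
  by (induction A rule: infinite_finite_induct) (auto intro: sym_space_add sym_space_0)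

lemma sym_space_mult:
  assumes P: "P \<in> sym_space n" and Q: "Q \<in> sym_space m"
  shows "P * Q \<in> sym_space (n + m)"
proof (rule sym_spaceI)
  fix i j assume "coeff (coeff (P * Q) i) j \<noteq> 0"
  moreover have "coeff (coeff (P * Q) i) j
      = (\<Sum>k\<le>i. \<Sum>l\<le>j. coeff (coeff P k) l * coeff (coeff Q (i - k)) (j - l))"
    by (simp add: coeff_mult coeff_sum)
  ultimately obtain k l where "k \<le> i" "l \<le> j"
     "coeff (coeff P k) l * coeff (coeff Q (i - k)) (j - l) \<noteq> 0"
    by (metis (no_types, lifting) atMost_iff sum.neutral)
  moreover from this have "k + l = n" "(i - k) + (j - l) = m"
    using sym_spaceD[OF P] sym_spaceD[OF Q] by auto
  ultimately show "i + j = n + m" by linarith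
qed

lemma sym_space_1: "1 \<in> sym_space 0"
  by (rule sym_spaceI) (auto simp: coeff_1 of_bool_def split: if_splits)

lemma sym_space_power: "P \<in> sym_space n \<Longrightarrow> P ^ k \<in> sym_space (k * n)"
  by (induction k) (auto simp: sym_space_1 dest: sym_space_mult)

lemma sym_space_const: "[:[:c:]:] \<in> sym_space 0"
  by (rule sym_spaceI) (auto simp: coeff_pCons split: nat.splits)

lemma sym_space_lin_uv: "lin_uv a b \<in> sym_space 1"
  by (rule sym_spaceI) (auto simp: lin_uv_def coeff_pCons split: nat.splits)

definition dehomogenize :: "'k::field poly poly \<Rightarrow> 'k poly" where
  "dehomogenize P = map_poly (\<lambda>q. poly q 1) P"

lemma is_ring_hom_dehomogenize: "is_ring_hom dehomogenize"
  unfolding dehomogenize_def by (intro is_ring_hom_map_poly is_ring_hom_poly)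

lemma sym_space_coeff:
  assumes "P \<in> sym_space n"
  shows "coeff P i = (if i \<le> n then monom (coeff (dehomogenize P) i) (n - i) else 0)"
proof -
  have monom: "coeff P i = monom (coeff (coeff P i) (n - i)) (n - i)"
    by (rule poly_eqI) (metis add_diff_cancel_left' coeff_monom sym_spaceD[OF assms])
  have "poly (coeff P i) 1 = coeff (coeff P i) (n - i)"
    using arg_cong[OF monom, of "\<lambda>q. poly q 1"] by (simp add: poly_monom)
  moreover have "i > n \<Longrightarrow> coeff P i = 0"
    by (rule poly_eqI) (use sym_spaceD[OF assms, of i] in auto)
  ultimately show ?thesis
    using monom by (auto simp: dehomogenize_def coeff_map_poly)
qed

lemma dehomogenize_inj:
  "P \<in> sym_space n \<Longrightarrow> Q \<in> sym_space n \<Longrightarrow> dehomogenize P = dehomogenize Q \<Longrightarrow> P = Q"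
  by (rule poly_eqI) (simp add: sym_space_coeff)

lemma degree_dehomogenize: "P \<in> sym_space n \<Longrightarrow> degree (dehomogenize P) \<le> n"
  by (rule degree_le) (simp add: dehomogenize_def coeff_map_poly sym_space_coeff)

definition sym_poly :: "nat \<Rightarrow> (nat \<Rightarrow> 'k::field) \<Rightarrow> 'k poly poly" where
  "sym_poly g cs = (\<Sum>i<g. smult [:cs i:] (sym_monom (g - 1) i))"

lemma coeff_sym_poly: "coeff (sym_poly g cs) i = (if i < g then monom (cs i) (g - 1 - i) else 0)"
  by (simp add: sym_poly_def coeff_sum sym_monom_def smult_monom coeff_monom mult_monom
      flip: monom_0)

lemma sym_poly_in_sym_space: "sym_poly g cs \<in> sym_space (g - 1)"
  by (rule sym_spaceI) (auto simp: coeff_sym_poly coeff_monom split: if_splits)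

lemma dehomogenize_sym_poly: "dehomogenize (sym_poly g cs) = poly_of_coeffs g cs"
  unfolding sym_poly_def poly_of_coeffs_def is_ring_hom_sum[OF is_ring_hom_dehomogenize]
  by (simp add: dehomogenize_def sym_monom_def smult_monom map_poly_monom poly_monom)

lemma sym_poly_dehomogenize:
  assumes "P \<in> sym_space (g - 1)" and "g \<ge> 1"
  shows "sym_poly g (coeff (dehomogenize P)) = P"
proof (rule dehomogenize_inj[OF sym_poly_in_sym_space assms(1)])
  have "degree (dehomogenize P) < g"
    using degree_dehomogenize[OF assms(1)] assms(2) by linarith
  thus "dehomogenize (sym_poly g (coeff (dehomogenize P))) = dehomogenize P"
    by (simp add: dehomogenize_sym_poly poly_of_coeffs_coeff)
qed

lemma sym_space_eq_range_sym_poly: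
  assumes "g \<ge> 1" shows "sym_space (g - 1) = range (sym_poly g)"
proof (intro subset_antisym subsetI)
  fix P assume "P \<in> sym_space (g - 1)"
  thus "P \<in> range (sym_poly g)" using sym_poly_dehomogenize[OF _ assms] by (metis rangeI)
next
  fix P assume "P \<in> range (sym_poly g)"
  thus "P \<in> sym_space (g - 1)" using sym_poly_in_sym_space by blast
qed

lemma sym_poly_eqD:
  fixes cs cs' :: "nat \<Rightarrow> 'k::field"
  assumes "sym_poly g cs = sym_poly g cs'" and "i < g" shows "cs i = cs' i"
proof -
  have "coeff (coeff (sym_poly g ds) i) (g - 1 - i) = ds i" for ds :: "nat \<Rightarrow> 'k"
    using \<open>i < g\<close> by (simp add: coeff_sym_poly)
  thus ?thesis by (metis assms(1))
qed

lemma is_ring_hom_sym_act: "is_ring_hom (sym_act a b c d :: 'k::field poly poly \<Rightarrow> _)"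
proof -
  have "is_ring_hom (\<lambda>e::'k. [:[:e:]:])"
    by (simp add: is_ring_hom_def pCons_one)
  hence "is_ring_hom (\<lambda>q::'k poly. poly (map_poly (\<lambda>e. [:[:e:]:]) q) (lin_uv c d))"
    using is_ring_hom_comp[OF is_ring_hom_map_poly is_ring_hom_poly] by blast
  thus ?thesis
    unfolding sym_act_def using is_ring_hom_comp[OF is_ring_hom_map_poly is_ring_hom_poly] by blast
qed

lemma sym_act_sym_poly_eq_sum:
  "sym_act a b c d (sym_poly g cs) = (\<Sum>i<g. [:[:cs i:]:] * lin_uv a b ^ i * lin_uv c d ^ (g - 1 - i))"
  unfolding sym_poly_def is_ring_hom_sum[OF is_ring_hom_sym_act]
  by (simp add: sym_act_def sym_monom_def smult_monom map_poly_monom poly_monom mult_ac)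

lemma sym_act_sym_poly:
  fixes a b c d :: "'k::field"
  assumes "g \<ge> 1"
  shows "sym_act a b c d (sym_poly g cs) = sym_poly g (coeff (transformed_numerator g a b c d cs))"
proof -
  let ?P = "sym_act a b c d (sym_poly g cs)"
  have "[:[:cs i:]:] * lin_uv a b ^ i * lin_uv c d ^ (g - 1 - i) \<in> sym_space (g - 1)" if "i < g" for i
  proof -
    have "[:[:cs i:]:] * lin_uv a b ^ i * lin_uv c d ^ (g - 1 - i) \<in> sym_space (0 + i * 1 + (g - 1 - i) * 1)"
      by (intro sym_space_mult sym_space_const sym_space_power sym_space_lin_uv)
    moreover have "0 + i * 1 + (g - 1 - i) * 1 = g - 1" using that by simp
    ultimately show ?thesis by (simp only:)
  qed
  hence "?P \<in> sym_space (g - 1)"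
    unfolding sym_act_sym_poly_eq_sum by (intro sym_space_sum) simp
  moreover have "dehomogenize ?P = transformed_numerator g a b c d cs"
    unfolding sym_act_sym_poly_eq_sum is_ring_hom_sum[OF is_ring_hom_dehomogenize]
      is_ring_hom_mult[OF is_ring_hom_dehomogenize] is_ring_hom_power[OF is_ring_hom_dehomogenize]
    by (simp add: transformed_numerator_def dehomogenize_def lin_uv_def map_poly_pCons)
  ultimately show ?thesis
    using sym_poly_dehomogenize[OF _ assms] by metis
qed

lemma bij_betw_range_factor:
  assumes "\<And>x. h (f x) = g x" and "\<And>x y. g x = g y \<Longrightarrow> f x = f y"
  shows "bij_betw h (range f) (range g)"
proof -
  have "inj_on h (range f)"
  proof (rule inj_onI)
    fix u v assume "u \<in> range f" "v \<in> range f" "h u = h v"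
    then obtain x y where "u = f x" "v = f y" "g x = g y" using assms(1) by auto
    thus "u = v" using assms(2) by blast
  qed
  moreover have "h ` range f = range g" by (simp add: image_image assms(1))
  ultimately show ?thesis by (simp add: bij_betw_def)
qed

theorem proposition2p2:
  fixes p :: nat
    and \<phi> :: "'k::field mdiff \<Rightarrow> 'k poly poly"
  assumes "prime p" and "p > 2"
    and "CHAR('k) = p"
    and "alg_closed_field TYPE('k)"
    and phi: "\<forall>c :: nat \<Rightarrow> 'k.
               \<phi> (\<Sum>i<genus p. k_smul (c i) (hol_basis p i))
                 = (\<Sum>i<genus p. smult [:c i:] (sym_monom (genus p - 1) i))"
  shows "bij_betw \<phi> (H0 p) (sym_space (genus p - 1)) \<and>
         (\<forall>a b c d. SL2_Fp p a b c d \<longrightarrow>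
            (\<forall>w \<in> H0 p.
               pullback_diff p (of_int a) (of_int b) (of_int c) (of_int d) 1 w \<in> H0 p \<and>
               \<phi> (pullback_diff p (of_int a) (of_int b) (of_int c) (of_int d) 1 w)
                 = sym_act (of_int a) (of_int b) (of_int c) (of_int d) (\<phi> w)))"
proof -
  define g where "g = genus p"
  have "g \<ge> 1" using \<open>p > 2\<close> by (simp add: g_def genus_def)
  have phi_hol_diff: "\<phi> (hol_diff p cs) = sym_poly g cs" for cs
    using phi by (simp add: hol_diff_def sym_poly_def g_def)
  have "bij_betw \<phi> (H0 p) (sym_space (g - 1))"
    unfolding H0_eq_range_hol_diff sym_space_eq_range_sym_poly[OF \<open>g \<ge> 1\<close>]
  proof (rule bij_betw_range_factor)
    show "\<phi> (hol_diff p cs) = sym_poly g cs" for cs by (fact phi_hol_diff)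
  next
    fix cs cs' :: "nat \<Rightarrow> 'k" assume "sym_poly g cs = sym_poly g cs'"
    thus "hol_diff p cs = hol_diff p cs'"
      unfolding hol_diff_def by (intro sum.cong) (auto dest: sym_poly_eqD simp: g_def)
  qed
  moreover have "pullback_diff p (of_int a) (of_int b) (of_int c) (of_int d) 1 w \<in> H0 p \<and>
      \<phi> (pullback_diff p (of_int a) (of_int b) (of_int c) (of_int d) 1 w)
        = sym_act (of_int a) (of_int b) (of_int c) (of_int d) (\<phi> w)"
    if "SL2_Fp p a b c d" and "w \<in> H0 p" for a b c d w
  proof -
    obtain cs where w: "w = hol_diff p cs" using \<open>w \<in> H0 p\<close> by (auto simp: H0_eq_range_hol_diff)
    have "SL2_prime_field p (of_int a :: 'k) (of_int b) (of_int c) (of_int d)"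
      using SL2_Fp_imp_SL2_prime_field assms(1,3) that(1) .
    from pullback_diff_hol_diff[OF assms(4,1,2,3) this] show ?thesis
      by (simp add: w phi_hol_diff H0_eq_range_hol_diff sym_act_sym_poly[OF \<open>g \<ge> 1\<close>] flip: g_def)
  qed
  ultimately show ?thesis by (simp add: g_def)
qed

end
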